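(* Let $X$ be a finite discrete space with at least two elements, $\Gamma$ a nonempty countable set, $d$ a compatible metric on $X^\Gamma$ (product topology), $\mathcal F$ the unique compatible uniformity on $X^\Gamma$, and $f:X^\Gamma\to X^\Gamma$ a map. For $x,y\in X^\Gamma$: (I) the following are equivalent: (1) there is $s>0$ with $F_{xy}(s)=0$; (2) there is $\alpha\in\mathcal F$ with $G_{xy}(\alpha)=0$; (3) there is a finite $D\subseteq\Gamma$ with $G_{xy}(\gamma_D)=0$. (II) The following are equivalent: (4) there is $s>0$ with $F_{xy}(s)<1$; (5) there is $\alpha\in\mathcal F$ with $G_{xy}(\alpha)<1$; (6) there is a finite $D\subseteq\Gamma$ with $G_{xy}(\gamma_D)<1$. (III) The following are equivalent: (7) $F^*_{xy}(s)=1$ for all $s>0$; (8) $G^*_{xy}(\alpha)=1$ for all $\alpha\in\mathcal F$; (9) $G^*_{xy}(\gamma_D)=1$ for every finite $D\subseteq\Gamma$.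
   Context: For $D\subseteq\Gamma$, $\gamma_D=\{((x_\alpha),(y_\alpha))\in X^\Gamma\times X^\Gamma:x_\alpha=y_\alpha\ \forall\alpha\in D\}$. The uniformity $\mathcal F$ consists of all $B\subseteq X^\Gamma\times X^\Gamma$ containing $\gamma_D$ for some finite $D\subseteq\Gamma$; equivalently, all $B$ containing $\{(x,y):d(x,y)<\varepsilon\}$ for some $\varepsilon>0$. For $\alpha\in\mathcal F$, $n\ge1$: $\zeta(x,y,\alpha,n)=\#\{i\in\{0,\dots,n-1\}:(f^i(x),f^i(y))\in\alpha\}$, $G_{xy}(\alpha)=\liminf_n\zeta(x,y,\alpha,n)/n$, $G^*_{xy}(\alpha)=\limsup_n\zeta(x,y,\alpha,n)/n$. Also $\xi(x,y,t,n)=\#\{i\in\{0,\dots,n-1\}:d(f^i(x),f^i(y))<t\}$, $F_{xy}(t)=\liminf_n\xi(x,y,t,n)/n$, $F^*_{xy}(t)=\limsup_n\xi(x,y,t,n)/n$. *)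

theory Defs
  imports "HOL-Analysis.Analysis" "HOL-Library.Liminf_Limsup"
begin

definition gammaD :: "'g set \<Rightarrow> 'a set \<Rightarrow> 'g set \<Rightarrow> (('g \<Rightarrow> 'a) \<times> ('g \<Rightarrow> 'a)) set" where
  "gammaD \<Gamma> X D = {(x, y). x \<in> PiE \<Gamma> (\<lambda>_. X) \<and> y \<in> PiE \<Gamma> (\<lambda>_. X) \<and> (\<forall>a\<in>D. x a = y a)}"

definition unif :: "'g set \<Rightarrow> 'a set \<Rightarrow> (('g \<Rightarrow> 'a) \<times> ('g \<Rightarrow> 'a)) set set" where
  "unif \<Gamma> X = {B. B \<subseteq> PiE \<Gamma> (\<lambda>_. X) \<times> PiE \<Gamma> (\<lambda>_. X) \<and>
                   (\<exists>D. finite D \<and> D \<subseteq> \<Gamma> \<and> gammaD \<Gamma> X D \<subseteq> B)}"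

definition zeta :: "('b \<Rightarrow> 'b) \<Rightarrow> 'b \<Rightarrow> 'b \<Rightarrow> ('b \<times> 'b) set \<Rightarrow> nat \<Rightarrow> nat" where
  "zeta f x y \<alpha> n = card {i. i < n \<and> ((f ^^ i) x, (f ^^ i) y) \<in> \<alpha>}"

definition Gl :: "('b \<Rightarrow> 'b) \<Rightarrow> 'b \<Rightarrow> 'b \<Rightarrow> ('b \<times> 'b) set \<Rightarrow> ereal" where
  "Gl f x y \<alpha> = liminf (\<lambda>n. ereal (real (zeta f x y \<alpha> n) / real n))"

definition Gu :: "('b \<Rightarrow> 'b) \<Rightarrow> 'b \<Rightarrow> 'b \<Rightarrow> ('b \<times> 'b) set \<Rightarrow> ereal" where
  "Gu f x y \<alpha> = limsup (\<lambda>n. ereal (real (zeta f x y \<alpha> n) / real n))"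

definition xi :: "('b \<Rightarrow> 'b) \<Rightarrow> ('b \<Rightarrow> 'b \<Rightarrow> real) \<Rightarrow> 'b \<Rightarrow> 'b \<Rightarrow> real \<Rightarrow> nat \<Rightarrow> nat" where
  "xi f d x y t n = card {i. i < n \<and> d ((f ^^ i) x) ((f ^^ i) y) < t}"

definition Fl :: "('b \<Rightarrow> 'b) \<Rightarrow> ('b \<Rightarrow> 'b \<Rightarrow> real) \<Rightarrow> 'b \<Rightarrow> 'b \<Rightarrow> real \<Rightarrow> ereal" where
  "Fl f d x y t = liminf (\<lambda>n. ereal (real (xi f d x y t n) / real n))"

definition Fu :: "('b \<Rightarrow> 'b) \<Rightarrow> ('b \<Rightarrow> 'b \<Rightarrow> real) \<Rightarrow> 'b \<Rightarrow> 'b \<Rightarrow> real \<Rightarrow> ereal" where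
  "Fu f d x y t = limsup (\<lambda>n. ereal (real (xi f d x y t n) / real n))"

end

theory Submission
  imports Defs
begin

(* On the compact space X^\<Gamma> all compatible uniformities coincide: the metric entourages
   {d < s}, the cylinder entourages gammaD \<Gamma> X D and the members of unif \<Gamma> X are mutually
   cofinal on X^\<Gamma> \<times> X^\<Gamma>.  One direction comes from uniform continuity of the coordinate
   projections into the discrete space X, the other from covering X^\<Gamma> by finitely many
   cylinders each inside a ball of radius s/2.  The densities F and G are monotone in the
   entourage, so "some lower density is 0 (resp. < 1)" and "every upper density is 1"
   transfer between mutually cofinal families. *)

lemma (in Metric_space) uniformly_locally_constant_into_discrete:
  assumes "compact_space mtopology" and "continuous_map mtopology (discrete_topology Y) g"
  shows "\<exists>\<delta>>0. \<forall>v\<in>M. \<forall>w\<in>M. d v w < \<delta> \<longrightarrow> g v = g w"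
proof -
  interpret Y: discrete_metric Y .
  have "uniformly_continuous_map Self (metric (Y, Y.dd)) g"
    using assms by (intro continuous_imp_uniformly_continuous_map)
      (simp add: Self_def Y.mtopology_discrete_metric)
  then obtain \<delta> where "\<delta> > 0" and "\<forall>v\<in>M. \<forall>w\<in>M. d w v < \<delta> \<longrightarrow> Y.dd (g w) (g v) < 1"
    unfolding uniformly_continuous_map_def by (metis Y.disc.mdist_metric mdist_Self mspace_Self zero_less_one)
  then show ?thesis
    by (metis Y.dd_def less_irrefl)
qed

definition cylinder :: "'g set \<Rightarrow> ('g \<Rightarrow> 'a set) \<Rightarrow> ('g \<Rightarrow> 'a) \<Rightarrow> 'g set \<Rightarrow> ('g \<Rightarrow> 'a) set" where
  "cylinder \<Gamma> X u D = {v \<in> PiE \<Gamma> X. \<forall>a\<in>D. v a = u a}"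

lemma mem_cylinder_self: "u \<in> PiE \<Gamma> X \<Longrightarrow> u \<in> cylinder \<Gamma> X u D"
  by (simp add: cylinder_def)

lemma openin_cylinder:
  assumes "finite D" and "D \<subseteq> \<Gamma>"
  shows "openin (product_topology (\<lambda>i. discrete_topology (X i)) \<Gamma>) (cylinder \<Gamma> X u D)"
  using assms
proof (induction D rule: finite_induct)
  case empty
  have "cylinder \<Gamma> X u {} = topspace (product_topology (\<lambda>i. discrete_topology (X i)) \<Gamma>)"
    by (simp add: cylinder_def)
  then show ?case by (metis openin_topspace)
next
  case (insert a D)
  let ?T = "product_topology (\<lambda>i. discrete_topology (X i)) \<Gamma>"
  have "cylinder \<Gamma> X u (insert a D) = cylinder \<Gamma> X u D \<inter> {v \<in> topspace ?T. v a \<in> X a \<inter> {u a}}"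
    using insert.prems by (auto simp: cylinder_def PiE_iff)
  moreover have "openin ?T {v \<in> topspace ?T. v a \<in> X a \<inter> {u a}}"
    using insert.prems by (intro openin_continuous_map_preimage[OF continuous_map_product_projection]) auto
  ultimately show ?case
    using insert by auto
qed

lemma cylinder_subset_of_openin:
  assumes "openin (product_topology (\<lambda>i. discrete_topology (X i)) \<Gamma>) U" and "u \<in> U"
  obtains D where "finite D" "D \<subseteq> \<Gamma>" "cylinder \<Gamma> X u D \<subseteq> U"
proof -
  obtain V where "finite {i \<in> \<Gamma>. V i \<noteq> X i}" and u: "u \<in> PiE \<Gamma> V" and "PiE \<Gamma> V \<subseteq> U"
    using assms by (force simp: openin_product_topology_alt)
  moreover have "cylinder \<Gamma> X u {i \<in> \<Gamma>. V i \<noteq> X i} \<subseteq> PiE \<Gamma> V"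
    using u by (fastforce simp: cylinder_def PiE_iff extensional_def)
  ultimately show ?thesis
    using that[of "{i \<in> \<Gamma>. V i \<noteq> X i}"] by blast
qed

locale discrete_product_metric = Metric_space "PiE \<Gamma> X" d
  for \<Gamma> :: "'g set" and X :: "'g \<Rightarrow> 'a set" and d +
  assumes mtopology_eq_product: "mtopology = product_topology (\<lambda>i. discrete_topology (X i)) \<Gamma>"
    and finite_factors: "\<And>i. i \<in> \<Gamma> \<Longrightarrow> finite (X i)"
begin

lemma compact_space_mtopology: "compact_space mtopology"
  by (simp add: mtopology_eq_product compact_space_product_topology
      compact_space_discrete_topology finite_factors)

lemma close_imp_agree_on_finite:
  assumes "finite D" and "D \<subseteq> \<Gamma>"
  shows "\<exists>\<delta>>0. \<forall>v\<in>PiE \<Gamma> X. \<forall>w\<in>PiE \<Gamma> X. d v w < \<delta> \<longrightarrow> (\<forall>a\<in>D. v a = w a)"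
  using assms
proof (induction D rule: finite_induct)
  case empty
  show ?case by (intro exI[of _ 1]) simp
next
  case (insert a D)
  then obtain \<delta>\<^sub>D where "\<delta>\<^sub>D > 0"
    and \<delta>\<^sub>D: "\<forall>v\<in>PiE \<Gamma> X. \<forall>w\<in>PiE \<Gamma> X. d v w < \<delta>\<^sub>D \<longrightarrow> (\<forall>a\<in>D. v a = w a)"
    by auto
  have "continuous_map mtopology (discrete_topology (X a)) (\<lambda>v. v a)"
    using insert.prems continuous_map_product_projection[of a \<Gamma> "\<lambda>i. discrete_topology (X i)"]
    by (simp add: mtopology_eq_product)
  then obtain \<delta>\<^sub>a where "\<delta>\<^sub>a > 0" and \<delta>\<^sub>a: "\<forall>v\<in>PiE \<Gamma> X. \<forall>w\<in>PiE \<Gamma> X. d v w < \<delta>\<^sub>a \<longrightarrow> v a = w a"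
    using uniformly_locally_constant_into_discrete compact_space_mtopology by blast
  show ?case
    using \<open>\<delta>\<^sub>D > 0\<close> \<open>\<delta>\<^sub>a > 0\<close> \<delta>\<^sub>D \<delta>\<^sub>a by (intro exI[of _ "min \<delta>\<^sub>D \<delta>\<^sub>a"]) auto
qed

(* Pick a cylinder around every point inside the ball of radius s/2 about it; by compactness
   finitely many of them cover, and D collects their coordinates. *)
lemma agree_on_finite_imp_close:
  assumes "s > 0"
  shows "\<exists>D. finite D \<and> D \<subseteq> \<Gamma> \<and>
           (\<forall>v\<in>PiE \<Gamma> X. \<forall>w\<in>PiE \<Gamma> X. (\<forall>a\<in>D. v a = w a) \<longrightarrow> d v w < s)"
proof -
  let ?T = "product_topology (\<lambda>i. discrete_topology (X i)) \<Gamma>"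
  have "\<forall>u\<in>PiE \<Gamma> X. \<exists>D. finite D \<and> D \<subseteq> \<Gamma> \<and> cylinder \<Gamma> X u D \<subseteq> mball u (s/2)"
  proof
    fix u assume "u \<in> PiE \<Gamma> X"
    have "openin ?T (mball u (s/2))"
      using mtopology_eq_product openin_mball by metis
    moreover have "u \<in> mball u (s/2)"
      using \<open>u \<in> PiE \<Gamma> X\<close> assms by simp
    ultimately obtain D where "finite D" "D \<subseteq> \<Gamma>" "cylinder \<Gamma> X u D \<subseteq> mball u (s/2)"
      by (rule cylinder_subset_of_openin)
    then show "\<exists>D. finite D \<and> D \<subseteq> \<Gamma> \<and> cylinder \<Gamma> X u D \<subseteq> mball u (s/2)"
      by blast
  qed
  then obtain D\<^sub>u where D\<^sub>u: "\<forall>u\<in>PiE \<Gamma> X.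
      finite (D\<^sub>u u) \<and> D\<^sub>u u \<subseteq> \<Gamma> \<and> cylinder \<Gamma> X u (D\<^sub>u u) \<subseteq> mball u (s/2)"
    by (rule bchoice[THEN exE])
  have "openin ?T (cylinder \<Gamma> X u (D\<^sub>u u))" if "u \<in> PiE \<Gamma> X" for u
    using D\<^sub>u that by (simp add: openin_cylinder)
  then have "\<forall>C \<in> (\<lambda>u. cylinder \<Gamma> X u (D\<^sub>u u)) ` PiE \<Gamma> X. openin ?T C"
    by blast
  moreover have "topspace ?T \<subseteq> \<Union>((\<lambda>u. cylinder \<Gamma> X u (D\<^sub>u u)) ` PiE \<Gamma> X)"
    using mem_cylinder_self by (simp add: subset_iff) blast
  moreover have "compact_space ?T"
    using compact_space_mtopology by (simp add: mtopology_eq_product)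
  ultimately obtain \<F> where "finite \<F>" "\<F> \<subseteq> (\<lambda>u. cylinder \<Gamma> X u (D\<^sub>u u)) ` PiE \<Gamma> X"
    and "topspace ?T \<subseteq> \<Union>\<F>"
    using compact_space_alt by (metis (no_types, lifting))
  then obtain K where "finite K" "K \<subseteq> PiE \<Gamma> X" "\<F> = (\<lambda>u. cylinder \<Gamma> X u (D\<^sub>u u)) ` K"
    by (meson finite_subset_image)
  with \<open>topspace ?T \<subseteq> \<Union>\<F>\<close> have cover: "PiE \<Gamma> X \<subseteq> (\<Union>u\<in>K. cylinder \<Gamma> X u (D\<^sub>u u))"
    by simp
  have "d v w < s" if v: "v \<in> PiE \<Gamma> X" and w: "w \<in> PiE \<Gamma> X"
    and agree: "\<forall>a\<in>(\<Union>u\<in>K. D\<^sub>u u). v a = w a" for v w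
  proof -
    obtain u where "u \<in> K" and "v \<in> cylinder \<Gamma> X u (D\<^sub>u u)"
      using cover v by blast
    moreover from this have "w \<in> cylinder \<Gamma> X u (D\<^sub>u u)"
      using agree w by (auto simp: cylinder_def)
    moreover have "u \<in> PiE \<Gamma> X"
      using \<open>u \<in> K\<close> \<open>K \<subseteq> PiE \<Gamma> X\<close> by blast
    ultimately have "v \<in> mball u (s/2)" and "w \<in> mball u (s/2)"
      using D\<^sub>u by blast+
    then show ?thesis
      using triangle[of v u w] commute[of v u] by auto
  qed
  moreover have "finite (\<Union>u\<in>K. D\<^sub>u u)" and "(\<Union>u\<in>K. D\<^sub>u u) \<subseteq> \<Gamma>"
    using D\<^sub>u \<open>finite K\<close> \<open>K \<subseteq> PiE \<Gamma> X\<close> by auto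
  ultimately show ?thesis
    by (intro exI[of _ "\<Union>u\<in>K. D\<^sub>u u"]) blast
qed

end

lemma zeta_le: "zeta f x y \<alpha> n \<le> n"
proof -
  have "zeta f x y \<alpha> n \<le> card {..<n}"
    unfolding zeta_def by (intro card_mono) auto
  then show ?thesis by simp
qed

lemma Gl_nonneg: "0 \<le> Gl f x y \<alpha>"
  unfolding Gl_def by (intro Liminf_bounded always_eventually) simp

lemma Gu_le_1: "Gu f x y \<alpha> \<le> 1"
  unfolding Gu_def
  by (intro Limsup_bounded always_eventually allI) (auto simp: zeta_le divide_le_eq_1)

lemma Fl_eq_Gl: "Fl f d x y t = Gl f x y {(v, w). d v w < t}"
  by (simp add: Fl_def Gl_def xi_def zeta_def)

lemma Fu_eq_Gu: "Fu f d x y t = Gu f x y {(v, w). d v w < t}"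
  by (simp add: Fu_def Gu_def xi_def zeta_def)

lemma zeta_mono:
  assumes "\<alpha> \<inter> S \<subseteq> \<beta>" and "\<And>i. ((f ^^ i) x, (f ^^ i) y) \<in> S"
  shows "zeta f x y \<alpha> n \<le> zeta f x y \<beta> n"
  unfolding zeta_def using assms by (intro card_mono) auto

lemma
  assumes "\<alpha> \<inter> S \<subseteq> \<beta>" and "\<And>i. ((f ^^ i) x, (f ^^ i) y) \<in> S"
  shows Gl_mono: "Gl f x y \<alpha> \<le> Gl f x y \<beta>"
    and Gu_mono: "Gu f x y \<alpha> \<le> Gu f x y \<beta>"
proof -
  have "ereal (real (zeta f x y \<alpha> n) / real n) \<le> ereal (real (zeta f x y \<beta> n) / real n)" for n
    using zeta_mono[OF assms] by (simp add: divide_right_mono)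
  then show "Gl f x y \<alpha> \<le> Gl f x y \<beta>" and "Gu f x y \<alpha> \<le> Gu f x y \<beta>"
    unfolding Gl_def Gu_def by (simp_all add: Liminf_mono Limsup_mono)
qed

definition finer_on :: "'b set \<Rightarrow> 'b set set \<Rightarrow> 'b set set \<Rightarrow> bool" where
  "finer_on S \<A> \<B> \<longleftrightarrow> (\<forall>B\<in>\<B>. \<exists>A\<in>\<A>. A \<inter> S \<subseteq> B)"

lemma finer_on_superset: "\<B> \<subseteq> \<A> \<Longrightarrow> finer_on S \<A> \<B>"
  unfolding finer_on_def by blast

lemma finer_on_trans:
  assumes "finer_on S \<A> \<B>" and "finer_on S \<B> \<C>"
  shows "finer_on S \<A> \<C>"
  unfolding finer_on_def
proof
  fix C assume "C \<in> \<C>"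
  then obtain B where "B \<in> \<B>" and "B \<inter> S \<subseteq> C"
    using assms(2) unfolding finer_on_def by blast
  moreover from \<open>B \<in> \<B>\<close> obtain A where "A \<in> \<A>" and "A \<inter> S \<subseteq> B"
    using assms(1) unfolding finer_on_def by blast
  ultimately show "\<exists>A\<in>\<A>. A \<inter> S \<subseteq> C"
    by blast
qed

lemma ex_Gl_if_finer:
  assumes "finer_on S \<A> \<B>" and "\<And>i. ((f ^^ i) x, (f ^^ i) y) \<in> S" and "antimono Q"
    and "B \<in> \<B>" and "Q (Gl f x y B)"
  shows "\<exists>A\<in>\<A>. Q (Gl f x y A)"
proof -
  obtain A where "A \<in> \<A>" and "A \<inter> S \<subseteq> B"
    using assms(1,4) unfolding finer_on_def by blast
  from \<open>A \<inter> S \<subseteq> B\<close> have "Gl f x y A \<le> Gl f x y B"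
    using assms(2) by (rule Gl_mono)
  then have "Q (Gl f x y A)"
    using antimonoD[OF assms(3)] assms(5) by (metis le_boolD)
  with \<open>A \<in> \<A>\<close> show ?thesis ..
qed

lemma all_Gu_if_finer:
  assumes "finer_on S \<A> \<B>" and "\<And>i. ((f ^^ i) x, (f ^^ i) y) \<in> S" and "mono Q"
    and "\<forall>A\<in>\<A>. Q (Gu f x y A)" and "B \<in> \<B>"
  shows "Q (Gu f x y B)"
proof -
  obtain A where "A \<in> \<A>" and "A \<inter> S \<subseteq> B"
    using assms(1,5) unfolding finer_on_def by blast
  from \<open>A \<inter> S \<subseteq> B\<close> have "Gu f x y A \<le> Gu f x y B"
    using assms(2) by (rule Gu_mono)
  moreover have "Q (Gu f x y A)"
    using assms(4) \<open>A \<in> \<A>\<close> ..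
  ultimately show ?thesis
    using monoD[OF assms(3)] by (metis le_boolD)
qed

lemma ex_Gl_iff_if_equally_fine:
  assumes "finer_on S \<A> \<B>" and "finer_on S \<B> \<A>"
    and "\<And>i. ((f ^^ i) x, (f ^^ i) y) \<in> S" and "antimono Q"
  shows "(\<exists>A\<in>\<A>. Q (Gl f x y A)) \<longleftrightarrow> (\<exists>B\<in>\<B>. Q (Gl f x y B))"
  using ex_Gl_if_finer[OF assms(1,3,4)] ex_Gl_if_finer[OF assms(2,3,4)] by blast

lemma all_Gu_iff_if_equally_fine:
  assumes "finer_on S \<A> \<B>" and "finer_on S \<B> \<A>"
    and "\<And>i. ((f ^^ i) x, (f ^^ i) y) \<in> S" and "mono Q"
  shows "(\<forall>A\<in>\<A>. Q (Gu f x y A)) \<longleftrightarrow> (\<forall>B\<in>\<B>. Q (Gu f x y B))"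
  using all_Gu_if_finer[OF assms(1,3,4)] all_Gu_if_finer[OF assms(2,3,4)] by blast

definition metric_entourages :: "('b \<Rightarrow> 'b \<Rightarrow> real) \<Rightarrow> ('b \<times> 'b) set set" where
  "metric_entourages d = (\<lambda>s. {(v, w). d v w < s}) ` {0<..}"

definition cylinder_entourages :: "'g set \<Rightarrow> 'a set \<Rightarrow> (('g \<Rightarrow> 'a) \<times> ('g \<Rightarrow> 'a)) set set" where
  "cylinder_entourages \<Gamma> X = gammaD \<Gamma> X ` {D. finite D \<and> D \<subseteq> \<Gamma>}"

lemma ex_metric_entourages:
  "(\<exists>s>0. Q (Fl f d x y s)) \<longleftrightarrow> (\<exists>A\<in>metric_entourages d. Q (Gl f x y A))"
  by (auto simp: metric_entourages_def Fl_eq_Gl)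

lemma all_metric_entourages:
  "(\<forall>s>0. Q (Fu f d x y s)) \<longleftrightarrow> (\<forall>A\<in>metric_entourages d. Q (Gu f x y A))"
  by (auto simp: metric_entourages_def Fu_eq_Gu)

lemma ex_cylinder_entourages:
  "(\<exists>D. finite D \<and> D \<subseteq> \<Gamma> \<and> Q (Gl f x y (gammaD \<Gamma> X D))) \<longleftrightarrow>
   (\<exists>A\<in>cylinder_entourages \<Gamma> X. Q (Gl f x y A))"
  by (auto simp: cylinder_entourages_def)

lemma all_cylinder_entourages:
  "(\<forall>D. finite D \<and> D \<subseteq> \<Gamma> \<longrightarrow> Q (Gu f x y (gammaD \<Gamma> X D))) \<longleftrightarrow>
   (\<forall>A\<in>cylinder_entourages \<Gamma> X. Q (Gu f x y A))"
  by (auto simp: cylinder_entourages_def)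

lemma Gl_eq_0_iff: "Gl f x y \<alpha> = 0 \<longleftrightarrow> Gl f x y \<alpha> \<le> 0"
  using Gl_nonneg[of f x y \<alpha>] by auto

lemma Gu_eq_1_iff: "Gu f x y \<alpha> = 1 \<longleftrightarrow> 1 \<le> Gu f x y \<alpha>"
  using Gu_le_1[of f x y \<alpha>] by auto

lemma funpow_in_funcset: "f \<in> A \<rightarrow> A \<Longrightarrow> x \<in> A \<Longrightarrow> (f ^^ n) x \<in> A"
  by (induction n) auto

lemma cylinder_entourages_equally_fine:
  assumes "finite X" and "Metric_space (PiE \<Gamma> (\<lambda>_. X)) d"
    and "Metric_space.mtopology (PiE \<Gamma> (\<lambda>_. X)) d = product_topology (\<lambda>_. discrete_topology X) \<Gamma>"
  defines "S \<equiv> PiE \<Gamma> (\<lambda>_. X) \<times> PiE \<Gamma> (\<lambda>_. X)"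
  shows metric_finer_cylinder: "finer_on S (metric_entourages d) (cylinder_entourages \<Gamma> X)"
    and cylinder_finer_metric: "finer_on S (cylinder_entourages \<Gamma> X) (metric_entourages d)"
    and unif_finer_cylinder: "finer_on S (unif \<Gamma> X) (cylinder_entourages \<Gamma> X)"
    and cylinder_finer_unif: "finer_on S (cylinder_entourages \<Gamma> X) (unif \<Gamma> X)"
proof -
  interpret discrete_product_metric \<Gamma> "\<lambda>_. X" d
    using assms by (simp add: discrete_product_metric_def discrete_product_metric_axioms_def)
  show "finer_on S (metric_entourages d) (cylinder_entourages \<Gamma> X)"
    unfolding finer_on_def cylinder_entourages_def
  proof safe
    fix D assume "finite D" "D \<subseteq> \<Gamma>"
    then obtain \<delta> where "\<delta> > 0"
      and "\<forall>v\<in>PiE \<Gamma> (\<lambda>_. X). \<forall>w\<in>PiE \<Gamma> (\<lambda>_. X). d v w < \<delta> \<longrightarrow> (\<forall>a\<in>D. v a = w a)"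
      using close_imp_agree_on_finite[OF \<open>finite D\<close> \<open>D \<subseteq> \<Gamma>\<close>] by blast
    then have "{(v, w). d v w < \<delta>} \<in> metric_entourages d" and "{(v, w). d v w < \<delta>} \<inter> S \<subseteq> gammaD \<Gamma> X D"
      unfolding metric_entourages_def S_def gammaD_def by blast+
    then show "\<exists>A\<in>metric_entourages d. A \<inter> S \<subseteq> gammaD \<Gamma> X D" ..
  qed
  show "finer_on S (cylinder_entourages \<Gamma> X) (metric_entourages d)"
    unfolding finer_on_def metric_entourages_def
  proof safe
    fix s :: real assume "s > 0"
    then obtain D where "finite D" "D \<subseteq> \<Gamma>"
      and "\<forall>v\<in>PiE \<Gamma> (\<lambda>_. X). \<forall>w\<in>PiE \<Gamma> (\<lambda>_. X). (\<forall>a\<in>D. v a = w a) \<longrightarrow> d v w < s"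
      using agree_on_finite_imp_close[OF \<open>s > 0\<close>] by blast
    then have "gammaD \<Gamma> X D \<in> cylinder_entourages \<Gamma> X" and "gammaD \<Gamma> X D \<inter> S \<subseteq> {(v, w). d v w < s}"
      unfolding cylinder_entourages_def gammaD_def by blast+
    then show "\<exists>A\<in>cylinder_entourages \<Gamma> X. A \<inter> S \<subseteq> {(v, w). d v w < s}" ..
  qed
  show "finer_on S (unif \<Gamma> X) (cylinder_entourages \<Gamma> X)"
    by (rule finer_on_superset) (auto simp: cylinder_entourages_def unif_def gammaD_def)
  show "finer_on S (cylinder_entourages \<Gamma> X) (unif \<Gamma> X)"
    unfolding finer_on_def unif_def cylinder_entourages_def by blast
qed

theorem lemma3p1:
  fixes X :: "'a set" and \<Gamma> :: "'g set"
    and d :: "('g \<Rightarrow> 'a) \<Rightarrow> ('g \<Rightarrow> 'a) \<Rightarrow> real"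
    and f :: "('g \<Rightarrow> 'a) \<Rightarrow> ('g \<Rightarrow> 'a)"
    and x y :: "'g \<Rightarrow> 'a"
  assumes "finite X" and "card X \<ge> 2"
    and "\<Gamma> \<noteq> {}" and "countable \<Gamma>"
    and "Metric_space (PiE \<Gamma> (\<lambda>_. X)) d"
    and "Metric_space.mtopology (PiE \<Gamma> (\<lambda>_. X)) d = product_topology (\<lambda>_. discrete_topology X) \<Gamma>"
    and "f \<in> PiE \<Gamma> (\<lambda>_. X) \<rightarrow> PiE \<Gamma> (\<lambda>_. X)"
    and "x \<in> PiE \<Gamma> (\<lambda>_. X)" and "y \<in> PiE \<Gamma> (\<lambda>_. X)"
  shows
    "(((\<exists>s>0. Fl f d x y s = 0) \<longleftrightarrow> (\<exists>\<alpha>\<in>unif \<Gamma> X. Gl f x y \<alpha> = 0))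
     \<and> ((\<exists>\<alpha>\<in>unif \<Gamma> X. Gl f x y \<alpha> = 0) \<longleftrightarrow>
          (\<exists>D. finite D \<and> D \<subseteq> \<Gamma> \<and> Gl f x y (gammaD \<Gamma> X D) = 0)))
     \<and> (((\<exists>s>0. Fl f d x y s < 1) \<longleftrightarrow> (\<exists>\<alpha>\<in>unif \<Gamma> X. Gl f x y \<alpha> < 1))
     \<and> ((\<exists>\<alpha>\<in>unif \<Gamma> X. Gl f x y \<alpha> < 1) \<longleftrightarrow>
          (\<exists>D. finite D \<and> D \<subseteq> \<Gamma> \<and> Gl f x y (gammaD \<Gamma> X D) < 1)))
     \<and> (((\<forall>s>0. Fu f d x y s = 1) \<longleftrightarrow> (\<forall>\<alpha>\<in>unif \<Gamma> X. Gu f x y \<alpha> = 1))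
     \<and> ((\<forall>\<alpha>\<in>unif \<Gamma> X. Gu f x y \<alpha> = 1) \<longleftrightarrow>
          (\<forall>D. finite D \<and> D \<subseteq> \<Gamma> \<longrightarrow> Gu f x y (gammaD \<Gamma> X D) = 1)))"
proof -
  let ?S = "PiE \<Gamma> (\<lambda>_. X) \<times> PiE \<Gamma> (\<lambda>_. X)"
  have orbit: "((f ^^ i) x, (f ^^ i) y) \<in> ?S" for i
    using funpow_in_funcset[OF assms(7)] assms(8,9) by auto
  note unif_cylinder = unif_finer_cylinder[OF assms(1,5,6)] cylinder_finer_unif[OF assms(1,5,6)]
  have metric_unif: "finer_on ?S (metric_entourages d) (unif \<Gamma> X)"
    "finer_on ?S (unif \<Gamma> X) (metric_entourages d)"
    using finer_on_trans unif_cylinder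
      metric_finer_cylinder[OF assms(1,5,6)] cylinder_finer_metric[OF assms(1,5,6)] by blast+
  have le_0: "antimono (\<lambda>v::ereal. v \<le> 0)" and less_1: "antimono (\<lambda>v::ereal. v < 1)"
    and ge_1: "mono (\<lambda>v::ereal. 1 \<le> v)"
    by (rule antimonoI monoI; auto)+
  note ex = ex_Gl_iff_if_equally_fine[OF _ _ orbit] and all = all_Gu_iff_if_equally_fine[OF _ _ orbit]
  show ?thesis
    unfolding ex_metric_entourages[where Q = "\<lambda>v. v = 0"] ex_metric_entourages[where Q = "\<lambda>v. v < 1"]
      all_metric_entourages[where Q = "\<lambda>v. v = 1"] ex_cylinder_entourages[where Q = "\<lambda>v. v = 0"]
      ex_cylinder_entourages[where Q = "\<lambda>v. v < 1"] all_cylinder_entourages[where Q = "\<lambda>v. v = 1"]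
    unfolding Gl_eq_0_iff Gu_eq_1_iff
    using ex[OF metric_unif le_0] ex[OF unif_cylinder le_0] ex[OF metric_unif less_1]
      ex[OF unif_cylinder less_1] all[OF metric_unif ge_1] all[OF unif_cylinder ge_1]
    by blast
qed

end
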